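(* Suppose that $R$ is a regular local ring dominated by $S$ and $(u,v)$ are regular parameters of $R$ such that $u=x^t$ and $v=y$, where $t$ is a positive integer. If $t\mid d_k$ for some $k>0$, then $\{u,\{T_i\}_{i=1}^{k+1}\}=\{T'_i\}_{i=0}^{k+1}$ is the beginning of a sequence of jumping polynomials in $R$ (with respect to $(u,v)$). Moreover, for all $1\le i\le k$ the pair of coprime integers defined in the construction of the jumping polynomials $\{T'_i\}_{i\ge0}$ in $R$ is $(p'_i,q'_i)=\left(\frac{p_i}{t},q_i\right)$.
   Context: Setting: $k$ (the base field) is algebraically closed of characteristic $0$; $K^*/K$ is a finite extension of function fields of transcendence degree $2$ over $k$; $\nu^*$ is a $k$-valuation of $K^*$ with valuation ring $V^*$, value group a subgroup of $\mathbb{Q}$ and residue field $V^*/m_{V^*}=k$; $\nu$ is its restriction to $K$. $S$ is an algebraic two-dimensional regular local ring with quotient field $K^*$ dominated by $V^*$, with regular parameters $(x,y)$; $\nu^*$ is normalized so that $\nu^*(x)=1$; $R$ is an algebraic regular local ring with quotient field $K$. Jumping polynomials of a ring $A$ with regular parameters $(a_0,a_1)$, with respect to the valuation $\mu=\nu^*/\nu^*(a_0)$ (so $\mu(a_0)=1$): $T_0=a_0$, $T_1=a_1$, $q_0=\infty$, $p_1,q_1$ coprime positive integers with $\mu(a_1)=p_1/q_1$; for $i\ge1$, $n_{i,j}$ ($0\le j<i$) are nonnegative integers with $n_{i,j}<q_j$ and $q_i\mu(T_i)=\sum_{j<i}n_{i,j}\mu(T_j)$, $\lambda_i\in k$ is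 the residue of $T_i^{q_i}/\prod_{j<i}T_j^{n_{i,j}}$, $T_{i+1}=T_i^{q_i}-\lambda_i\prod_{j<i}T_j^{n_{i,j}}$, and $p_{i+1},q_{i+1}$ are coprime positive integers with $\mu(T_{i+1})=q_i\mu(T_i)+\frac{1}{q_1\cdots q_i}\frac{p_{i+1}}{q_{i+1}}$. Here $\{T_i\}$, $p_i$, $q_i$ denote the jumping polynomials and integers of $S$ with respect to $(x,y)$, $\{T'_i\}$, $p'_i,q'_i$ those of $R$ with respect to $(u,v)$, and $d_k=\gcd(p_1,\dots,p_k)$. *)

theory Defs
  imports "HOL-Computational_Algebra.Polynomial"
begin

text \<open>The ambient field is the function field K*, modelled as a type of class field_char_0.
  The base field k is a subset kk of it.  A valuation is represented by its values on
  nonzero elements, nu :: 'a => rat (value group a subgroup of Q).\<close>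

definition is_subfield :: "'a::field set \<Rightarrow> bool" where
  "is_subfield kk \<longleftrightarrow> 0 \<in> kk \<and> 1 \<in> kk \<and>
     (\<forall>a\<in>kk. \<forall>b\<in>kk. a + b \<in> kk \<and> a * b \<in> kk) \<and>
     (\<forall>a\<in>kk. - a \<in> kk \<and> inverse a \<in> kk)"

definition alg_closed_subfield :: "'a::field set \<Rightarrow> bool" where
  "alg_closed_subfield kk \<longleftrightarrow> is_subfield kk \<and>
     (\<forall>f :: 'a poly. (\<forall>i. coeff f i \<in> kk) \<and> degree f > 0 \<longrightarrow> (\<exists>c\<in>kk. poly f c = 0))"

definition residue_is :: "('a::field \<Rightarrow> rat) \<Rightarrow> 'a \<Rightarrow> 'a \<Rightarrow> bool" where
  "residue_is \<nu> f c \<longleftrightarrow> f - c = 0 \<or> \<nu> (f - c) > 0"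

definition k_valuation_residue_k :: "('a::field \<Rightarrow> rat) \<Rightarrow> 'a set \<Rightarrow> bool" where
  "k_valuation_residue_k \<nu> kk \<longleftrightarrow>
     (\<forall>a b. a \<noteq> 0 \<and> b \<noteq> 0 \<longrightarrow> \<nu> (a * b) = \<nu> a + \<nu> b) \<and>
     (\<forall>a b. a \<noteq> 0 \<and> b \<noteq> 0 \<and> a + b \<noteq> 0 \<longrightarrow> \<nu> (a + b) \<ge> min (\<nu> a) (\<nu> b)) \<and>
     (\<forall>c\<in>kk. c \<noteq> 0 \<longrightarrow> \<nu> c = 0) \<and>
     (\<forall>f. f \<noteq> 0 \<and> \<nu> f \<ge> 0 \<longrightarrow> (\<exists>c\<in>kk. residue_is \<nu> f c))"

text \<open>The first N+1 jumping polynomials T 0, ..., T N of a ring with regular parameters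
  (a0, a1) w.r.t. mu = nu / nu(a0), together with the integers p i, q i (1 <= i <= N),
  n i j (1 <= i < N, j < i) and the residues lam i (1 <= i < N).  q 0 = infinity is
  encoded by imposing no bound on n i 0.\<close>
definition jumping_prefix ::
  "('a::field \<Rightarrow> rat) \<Rightarrow> 'a set \<Rightarrow> 'a \<Rightarrow> 'a \<Rightarrow> (nat \<Rightarrow> 'a) \<Rightarrow> (nat \<Rightarrow> nat) \<Rightarrow> (nat \<Rightarrow> nat)
    \<Rightarrow> (nat \<Rightarrow> nat \<Rightarrow> nat) \<Rightarrow> (nat \<Rightarrow> 'a) \<Rightarrow> nat \<Rightarrow> bool" where
  "jumping_prefix \<nu> kk a0 a1 T p q n lam N \<longleftrightarrow>
    (let \<mu> = (\<lambda>f. \<nu> f / \<nu> a0) in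
      1 \<le> N \<and> T 0 = a0 \<and> T 1 = a1 \<and>
      (\<forall>i\<in>{0..N}. T i \<noteq> 0) \<and>
      (\<forall>i\<in>{1..N}. p i > 0 \<and> q i > 0 \<and> coprime (p i) (q i)) \<and>
      \<mu> a1 = of_nat (p 1) / of_nat (q 1) \<and>
      (\<forall>i\<in>{1..<N}.
         (\<forall>j\<in>{1..<i}. n i j < q j) \<and>
         of_nat (q i) * \<mu> (T i) = (\<Sum>j<i. of_nat (n i j) * \<mu> (T j)) \<and>
         lam i \<in> kk \<and>
         residue_is \<nu> (T i ^ q i / (\<Prod>j<i. T j ^ n i j)) (lam i) \<and>
         T (Suc i) = T i ^ q i - lam i * (\<Prod>j<i. T j ^ n i j) \<and>
         \<mu> (T (Suc i)) = of_nat (q i) * \<mu> (T i)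
             + (1 / of_nat (\<Prod>j\<in>{1..i}. q j)) * (of_nat (p (Suc i)) / of_nat (q (Suc i)))))"

definition dk :: "(nat \<Rightarrow> nat) \<Rightarrow> nat \<Rightarrow> nat" where
  "dk p k = Gcd (p ` {1..k})"

end

theory Submission
  imports Defs
begin

text \<open>Let \<open>\<mu> = \<nu> / \<nu>(x)\<close>.  If \<open>t\<close> divides \<open>p\<^sub>1, ..., p\<^sub>k\<close>, it is coprime to \<open>q\<^sub>1, ..., q\<^sub>k\<close>, so
  \<open>\<mu>(T\<^sub>1) = p\<^sub>1 / q\<^sub>1\<close> and, through the recursion
  \<open>\<mu>(T\<^sub>i\<^sub>+\<^sub>1) = q\<^sub>i \<mu>(T\<^sub>i) + p\<^sub>i\<^sub>+\<^sub>1 / (q\<^sub>1 ... q\<^sub>i\<^sub>+\<^sub>1)\<close>, every \<open>\<mu>(T\<^sub>i)\<close> with \<open>i \<le> k\<close> has the form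
  \<open>t a / b\<close> with \<open>b\<close> coprime to \<open>t\<close>.  The relation \<open>q\<^sub>i \<mu>(T\<^sub>i) = \<Sum>\<^sub>j n\<^sub>i\<^sub>j \<mu>(T\<^sub>j)\<close> then forces
  \<open>t\<close> to divide the exponent \<open>n\<^sub>i\<^sub>0\<close> of \<open>x\<close>, so every monomial in the construction is already a
  monomial in \<open>u = x\<^sup>t\<close>.  As \<open>\<nu>(u) = t \<nu>(x)\<close>, all normalized values are divided by \<open>t\<close>, which
  turns \<open>p\<^sub>i / q\<^sub>i\<close> into \<open>p\<^sub>i / (t q\<^sub>i)\<close>, in lowest terms \<open>(p\<^sub>i / t) / q\<^sub>i\<close> for \<open>i \<le> k\<close>.\<close>

text \<open>The ideal \<open>t \<int>\<^sub>S\<close> of the localisation of \<open>\<int>\<close> at \<open>S = {b. coprime b t}\<close>.\<close>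
definition local_multiples :: "nat \<Rightarrow> rat set" where
  "local_multiples t =
     {r. \<exists>a::int. \<exists>b::nat. b > 0 \<and> coprime b t \<and> r * of_nat b = of_nat t * of_int a}"

lemma local_multiplesI:
  assumes "b > 0" "coprime b t" "r * of_nat b = of_nat t * of_int a"
  shows "r \<in> local_multiples t"
  using assms unfolding local_multiples_def by blast

lemma local_multiplesE:
  assumes "r \<in> local_multiples t"
  obtains a b where "b > 0" "coprime b t" "r * of_nat b = of_nat t * of_int a"
  using assms unfolding local_multiples_def by blast

lemma zero_in_local_multiples: "0 \<in> local_multiples t"
  by (rule local_multiplesI[of 1 _ _ 0]) simp_all

lemma local_multiples_add:
  assumes "r \<in> local_multiples t" "s \<in> local_multiples t"
  shows "r + s \<in> local_multiples t"
proof -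
  obtain a b where ab: "b > 0" "coprime b t" "r * of_nat b = of_nat t * of_int a"
    using assms(1) by (rule local_multiplesE)
  obtain c d where cd: "d > 0" "coprime d t" "s * of_nat d = of_nat t * of_int c"
    using assms(2) by (rule local_multiplesE)
  have "(r + s) * of_nat (b * d) = (r * of_nat b) * of_nat d + (s * of_nat d) * of_nat b"
    by (simp add: algebra_simps)
  also have "\<dots> = of_nat t * of_int (a * int d + c * int b)"
    using ab cd by (simp add: algebra_simps)
  finally show ?thesis
    using ab cd by (intro local_multiplesI[of "b * d" t _ "a * int d + c * int b"]) auto
qed

lemma local_multiples_diff:
  assumes "r \<in> local_multiples t" "s \<in> local_multiples t"
  shows "r - s \<in> local_multiples t"
proof -
  obtain c d where cd: "d > 0" "coprime d t" "s * of_nat d = of_nat t * of_int c"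
    using assms(2) by (rule local_multiplesE)
  then have "- s \<in> local_multiples t"
    by (intro local_multiplesI[of d _ _ "- c"]) simp_all
  then show ?thesis
    using local_multiples_add[OF assms(1)] by (simp only: diff_conv_add_uminus)
qed

lemma local_multiples_of_nat_mult:
  assumes "r \<in> local_multiples t"
  shows "of_nat m * r \<in> local_multiples t"
proof -
  obtain a b where ab: "b > 0" "coprime b t" "r * of_nat b = of_nat t * of_int a"
    using assms by (rule local_multiplesE)
  then have "(of_nat m * r) * of_nat b = of_nat t * of_int (int m * a)"
    by (simp add: mult.assoc mult.left_commute)
  then show ?thesis
    using ab by (intro local_multiplesI[of b t _ "int m * a"]) auto
qed

lemma local_multiples_sum:
  "(\<And>j. j \<in> A \<Longrightarrow> f j \<in> local_multiples t) \<Longrightarrow> (\<Sum>j\<in>A. f j) \<in> local_multiples t"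
  by (induction A rule: infinite_finite_induct)
     (simp_all add: zero_in_local_multiples local_multiples_add)

lemma of_nat_divide_in_local_multiples:
  assumes "t dvd a" "coprime b t" "b > 0"
  shows "of_nat a / of_nat b \<in> local_multiples t"
proof -
  obtain c where "a = t * c"
    using assms(1) by blast
  then have "(of_nat a / of_nat b) * of_nat b = (of_nat t * of_int (int c) :: rat)"
    using assms(3) by simp
  then show ?thesis
    using assms by (intro local_multiplesI[of b t _ "int c"]) auto
qed

lemma dvd_if_of_nat_in_local_multiples:
  assumes "of_nat m \<in> local_multiples t"
  shows "t dvd m"
proof -
  obtain a b where ab: "b > 0" "coprime b t" "of_nat m * of_nat b = (of_nat t * of_int a :: rat)"
    using assms by (rule local_multiplesE)
  then have "int m * int b = int t * a"
    by (metis of_int_eq_iff of_int_mult of_int_of_nat_eq)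
  then have "int t dvd int m * int b"
    by simp
  moreover have "coprime (int t) (int b)"
    using ab(2) by (simp add: coprime_commute)
  ultimately have "int t dvd int m"
    using coprime_dvd_mult_left_iff by blast
  then show ?thesis
    by simp
qed

lemma k_valuation_power:
  fixes x :: "'a::field"
  assumes "k_valuation_residue_k \<nu> kk" "x \<noteq> 0"
  shows "\<nu> (x ^ m) = of_nat m * \<nu> x"
proof -
  have mult: "\<And>a b. a \<noteq> 0 \<Longrightarrow> b \<noteq> 0 \<Longrightarrow> \<nu> (a * b) = \<nu> a + \<nu> b"
    using assms(1) unfolding k_valuation_residue_k_def by blast
  show ?thesis
  proof (induction m)
    case 0
    show ?case
      using mult[of 1 1] by simp
  next
    case (Suc m)
    then show ?case
      using mult[of x "x ^ m"] assms(2) by (simp add: algebra_simps)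
  qed
qed

lemma gcd_mult_right_eq_factor:
  fixes t p q :: nat
  assumes "t dvd p" "coprime p q"
  shows "gcd p (t * q) = t"
proof -
  obtain c where c: "p = t * c"
    using assms(1) by blast
  then have "coprime c q"
    using assms(2) by simp
  then show ?thesis
    using c by (simp flip: gcd_mult_distrib_nat)
qed

lemma of_nat_div_gcd_divide:
  fixes a b :: nat
  assumes "b > 0"
  shows "of_nat (a div gcd a b) / of_nat (b div gcd a b) = (of_nat a / of_nat b :: 'a::field_char_0)"
  using assms by (simp add: of_nat_of_nat_div)

definition jumping_step ::
  "('a::field \<Rightarrow> rat) \<Rightarrow> 'a set \<Rightarrow> 'a \<Rightarrow> (nat \<Rightarrow> 'a) \<Rightarrow> (nat \<Rightarrow> nat) \<Rightarrow> (nat \<Rightarrow> nat)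
    \<Rightarrow> (nat \<Rightarrow> nat \<Rightarrow> nat) \<Rightarrow> (nat \<Rightarrow> 'a) \<Rightarrow> nat \<Rightarrow> bool" where
  "jumping_step \<nu> kk a0 T p q n lam i \<longleftrightarrow>
     (\<forall>j\<in>{1..<i}. n i j < q j) \<and>
     of_nat (q i) * (\<nu> (T i) / \<nu> a0) = (\<Sum>j<i. of_nat (n i j) * (\<nu> (T j) / \<nu> a0)) \<and>
     lam i \<in> kk \<and>
     residue_is \<nu> (T i ^ q i / (\<Prod>j<i. T j ^ n i j)) (lam i) \<and>
     T (Suc i) = T i ^ q i - lam i * (\<Prod>j<i. T j ^ n i j) \<and>
     \<nu> (T (Suc i)) / \<nu> a0 = of_nat (q i) * (\<nu> (T i) / \<nu> a0)
       + (1 / of_nat (\<Prod>j\<in>{1..i}. q j)) * (of_nat (p (Suc i)) / of_nat (q (Suc i)))"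

lemma jumping_prefix_iff_steps:
  "jumping_prefix \<nu> kk a0 a1 T p q n lam N \<longleftrightarrow>
     1 \<le> N \<and> T 0 = a0 \<and> T 1 = a1 \<and> (\<forall>i\<in>{0..N}. T i \<noteq> 0) \<and>
     (\<forall>i\<in>{1..N}. p i > 0 \<and> q i > 0 \<and> coprime (p i) (q i)) \<and>
     \<nu> a1 / \<nu> a0 = of_nat (p 1) / of_nat (q 1) \<and>
     (\<forall>i\<in>{1..<N}. jumping_step \<nu> kk a0 T p q n lam i)"
  unfolding jumping_prefix_def jumping_step_def Let_def by (rule refl)

lemma jumping_prefix_coprime:
  assumes "jumping_prefix \<nu> kk a0 a1 T p q n lam N" "1 \<le> i" "i \<le> N"
  shows "p i > 0" "q i > 0" "coprime (p i) (q i)"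
  using assms by (auto simp: jumping_prefix_iff_steps)

lemma jumping_prefix_step:
  assumes "jumping_prefix \<nu> kk a0 a1 T p q n lam N" "1 \<le> i" "i < N"
  shows "jumping_step \<nu> kk a0 T p q n lam i"
  using assms by (auto simp: jumping_prefix_iff_steps)

lemma jumping_prefix_base_value_nonzero:
  assumes "jumping_prefix \<nu> kk a0 a1 T p q n lam N"
  shows "\<nu> a0 \<noteq> 0"
proof
  assume "\<nu> a0 = 0"
  moreover have "p 1 > 0" "q 1 > 0"
    using jumping_prefix_coprime[OF assms, of 1] assms by (auto simp: jumping_prefix_iff_steps)
  ultimately show False
    using assms by (simp add: jumping_prefix_iff_steps)
qed

lemma jumping_prefix_value_in_local_multiples:
  assumes J: "jumping_prefix \<nu> kk a0 a1 T p q n lam N"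
    and tdvd: "\<forall>i\<in>{1..<N}. t dvd p i"
    and i: "1 \<le> i" "i < N"
  shows "\<nu> (T i) / \<nu> a0 \<in> local_multiples t"
proof -
  have coprime_q: "coprime (q j) t" "q j > 0" if "1 \<le> j" "j < N" for j
  proof -
    have "t dvd p j" "coprime (p j) (q j)" "q j > 0"
      using jumping_prefix_coprime[OF J, of j] tdvd that by auto
    then show "coprime (q j) t" "q j > 0"
      using coprime_divisors[of t "p j" "q j" "q j"] by (auto simp: coprime_commute)
  qed
  have coprime_prod: "coprime (\<Prod>j\<in>{1..m}. q j) t" if "m < N" for m
    using that coprime_q by (intro prod_coprime_left) auto
  show ?thesis
    using i
  proof (induction i)
    case 0
    then show ?case by simp
  next
    case (Suc i)
    show ?case
    proof (cases "i = 0")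
      case True
      then show ?thesis
        using J tdvd coprime_q[of 1] Suc.prems
        by (auto simp: jumping_prefix_iff_steps intro: of_nat_divide_in_local_multiples)
    next
      case False
      then have "jumping_step \<nu> kk a0 T p q n lam i"
        using jumping_prefix_step[OF J] Suc.prems by simp
      then have "\<nu> (T (Suc i)) / \<nu> a0 = of_nat (q i) * (\<nu> (T i) / \<nu> a0)
          + (1 / of_nat (\<Prod>j\<in>{1..i}. q j)) * (of_nat (p (Suc i)) / of_nat (q (Suc i)))"
        unfolding jumping_step_def by blast
      also have "(1 / of_nat (\<Prod>j\<in>{1..i}. q j)) * (of_nat (p (Suc i)) / of_nat (q (Suc i)))
          = (of_nat (p (Suc i)) / of_nat (\<Prod>j\<in>{1..Suc i}. q j) :: rat)"
        by (simp add: prod.cl_ivl_Suc)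
      finally have value_Suc: "\<nu> (T (Suc i)) / \<nu> a0 = of_nat (q i) * (\<nu> (T i) / \<nu> a0)
          + of_nat (p (Suc i)) / of_nat (\<Prod>j\<in>{1..Suc i}. q j)" .
      have "\<nu> (T i) / \<nu> a0 \<in> local_multiples t"
        using Suc False by simp
      moreover have "of_nat (p (Suc i)) / of_nat (\<Prod>j\<in>{1..Suc i}. q j) \<in> local_multiples t"
      proof (rule of_nat_divide_in_local_multiples)
        show "t dvd p (Suc i)"
          using tdvd Suc.prems by auto
        show "coprime (\<Prod>j\<in>{1..Suc i}. q j) t"
          using Suc.prems by (intro coprime_prod) simp
        show "0 < (\<Prod>j\<in>{1..Suc i}. q j)"
          using coprime_q Suc.prems by (intro prod_pos) auto
      qed
      ultimately show ?thesis
        unfolding value_Suc by (intro local_multiples_add local_multiples_of_nat_mult)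
    qed
  qed
qed

lemma jumping_prefix_dvd_base_exponent:
  assumes J: "jumping_prefix \<nu> kk a0 a1 T p q n lam N"
    and tdvd: "\<forall>i\<in>{1..<N}. t dvd p i"
    and i: "1 \<le> i" "i < N"
  shows "t dvd n i 0"
proof -
  have "jumping_step \<nu> kk a0 T p q n lam i"
    using jumping_prefix_step[OF J i] .
  then have "of_nat (q i) * (\<nu> (T i) / \<nu> a0)
      = of_nat (n i 0) * (\<nu> a0 / \<nu> a0) + (\<Sum>j\<in>{1..<i}. of_nat (n i j) * (\<nu> (T j) / \<nu> a0))"
    using J i by (simp add: jumping_step_def jumping_prefix_iff_steps lessThan_atLeast0
                             sum.atLeast_Suc_lessThan)
  then have "of_nat (n i 0)
      = of_nat (q i) * (\<nu> (T i) / \<nu> a0) - (\<Sum>j\<in>{1..<i}. of_nat (n i j) * (\<nu> (T j) / \<nu> a0))"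
    using jumping_prefix_base_value_nonzero[OF J] by simp
  also have "\<dots> \<in> local_multiples t"
    using jumping_prefix_value_in_local_multiples[OF J tdvd] i
    by (intro local_multiples_diff local_multiples_sum local_multiples_of_nat_mult) auto
  finally show ?thesis
    by (rule dvd_if_of_nat_in_local_multiples)
qed

lemma jumping_step_power_base:
  fixes \<nu> :: "'a::field \<Rightarrow> rat"
  assumes val: "k_valuation_residue_k \<nu> kk"
    and a0: "a0 \<noteq> 0" "T 0 = a0"
    and t: "t > 0"
    and step: "jumping_step \<nu> kk a0 T p q n lam i"
    and i: "1 \<le> i"
    and dvd_n: "t dvd n i 0"
    and gcd_eq: "\<forall>j\<in>{1..i}. gcd (p j) (t * q j) = t"
    and q_Suc: "q (Suc i) > 0"
  shows "jumping_step \<nu> kk (a0 ^ t) (T(0 := a0 ^ t))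
           (\<lambda>j. p j div gcd (p j) (t * q j)) (\<lambda>j. t * q j div gcd (p j) (t * q j))
           (\<lambda>i j. if j = 0 then n i 0 div t else n i j) lam i"
proof -
  define T' where "T' = T(0 := a0 ^ t)"
  define p' where "p' = (\<lambda>j. p j div gcd (p j) (t * q j))"
  define q' where "q' = (\<lambda>j. t * q j div gcd (p j) (t * q j))"
  define n' where "n' = (\<lambda>i j. if j = 0 then n i 0 div t else n i j)"
  have q'_eq: "q' j = q j" if "j \<in> {1..i}" for j
    using gcd_eq that t unfolding q'_def by simp
  have T'_eq: "T' j = T j" if "j \<noteq> 0" for j
    using that unfolding T'_def by simp
  have power_value: "\<nu> (a0 ^ t) = of_nat t * \<nu> a0"
    using k_valuation_power[OF val a0(1)] .
  have exponents: "\<forall>j\<in>{1..<i}. n' i j < q' j"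
    using step q'_eq unfolding jumping_step_def n'_def by auto
  have value_relation:
    "of_nat (q' i) * (\<nu> (T' i) / \<nu> (a0 ^ t)) = (\<Sum>j<i. of_nat (n' i j) * (\<nu> (T' j) / \<nu> (a0 ^ t)))"
  proof -
    have "(\<Sum>j<i. of_nat (n' i j) * (\<nu> (T' j) / \<nu> (a0 ^ t)))
        = (\<Sum>j<i. of_nat (n i j) * (\<nu> (T j) / \<nu> a0)) / of_nat t"
      unfolding sum_divide_distrib
    proof (rule sum.cong[OF refl])
      fix j
      show "of_nat (n' i j) * (\<nu> (T' j) / \<nu> (a0 ^ t)) = of_nat (n i j) * (\<nu> (T j) / \<nu> a0) / of_nat t"
      proof (cases "j = 0")
        case True
        then show ?thesis
          using dvd_n a0 t power_value by (auto simp: T'_def n'_def elim!: dvdE)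
      qed (simp add: T'_eq n'_def power_value)
    qed
    also have "\<dots> = of_nat (q i) * (\<nu> (T i) / \<nu> a0) / of_nat t"
      using step unfolding jumping_step_def by simp
    also have "\<dots> = of_nat (q' i) * (\<nu> (T' i) / \<nu> (a0 ^ t))"
      using i q'_eq[of i] T'_eq[of i] power_value by simp
    finally show ?thesis ..
  qed
  have monomial_eq: "(\<Prod>j<i. T' j ^ n' i j) = (\<Prod>j<i. T j ^ n i j)"
  proof (rule prod.cong[OF refl])
    fix j
    have "(a0 ^ t) ^ (n i 0 div t) = a0 ^ n i 0"
      using dvd_n by (simp flip: power_mult)
    then show "T' j ^ n' i j = T j ^ n i j"
      using a0(2) by (cases "j = 0") (simp_all add: T'_def n'_def)
  qed
  have value_Suc: "\<nu> (T' (Suc i)) / \<nu> (a0 ^ t) = of_nat (q' i) * (\<nu> (T' i) / \<nu> (a0 ^ t))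
      + 1 / of_nat (\<Prod>j\<in>{1..i}. q' j) * (of_nat (p' (Suc i)) / of_nat (q' (Suc i)))"
  proof -
    have "\<nu> (T' (Suc i)) / \<nu> (a0 ^ t) = \<nu> (T (Suc i)) / \<nu> a0 / of_nat t"
      using T'_eq[of "Suc i"] power_value by (simp add: mult.commute)
    also have "\<dots> = (of_nat (q i) * (\<nu> (T i) / \<nu> a0)
        + 1 / of_nat (\<Prod>j\<in>{1..i}. q j) * (of_nat (p (Suc i)) / of_nat (q (Suc i)))) / of_nat t"
      using step unfolding jumping_step_def by (elim conjE) (simp only:)
    also have "\<dots> = of_nat (q i) * (\<nu> (T i) / \<nu> (a0 ^ t))
        + 1 / of_nat (\<Prod>j\<in>{1..i}. q j) * (of_nat (p (Suc i)) / of_nat (q (Suc i)) / of_nat t)"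
      using power_value by (simp add: add_divide_distrib mult.commute)
    also have "(\<Prod>j\<in>{1..i}. q j) = (\<Prod>j\<in>{1..i}. q' j)"
      using q'_eq by (intro prod.cong) simp_all
    also have "of_nat (p (Suc i)) / of_nat (q (Suc i)) / of_nat t
        = (of_nat (p' (Suc i)) / of_nat (q' (Suc i)) :: rat)"
      using of_nat_div_gcd_divide[where 'a = rat and a = "p (Suc i)" and b = "t * q (Suc i)"] q_Suc t
      unfolding p'_def q'_def by (simp add: mult.commute)
    finally show ?thesis
      using i q'_eq[of i] T'_eq[of i] by simp
  qed
  show ?thesis
    unfolding T'_def[symmetric] p'_def[symmetric] q'_def[symmetric] n'_def[symmetric]
    using step exponents value_relation monomial_eq value_Suc q'_eq[of i] T'_eq i
    unfolding jumping_step_def by simp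
qed

lemma jumping_prefix_power_base:
  fixes \<nu> :: "'a::field \<Rightarrow> rat"
  assumes val: "k_valuation_residue_k \<nu> kk"
    and J: "jumping_prefix \<nu> kk a0 a1 T p q n lam N"
    and t: "t > 0"
    and tdvd: "\<forall>i\<in>{1..<N}. t dvd p i"
  shows "jumping_prefix \<nu> kk (a0 ^ t) a1 (T(0 := a0 ^ t))
           (\<lambda>j. p j div gcd (p j) (t * q j)) (\<lambda>j. t * q j div gcd (p j) (t * q j))
           (\<lambda>i j. if j = 0 then n i 0 div t else n i j) lam N"
proof -
  have N: "1 \<le> N" and T01: "T 0 = a0" "T 1 = a1" and T_nonzero: "\<forall>i\<in>{0..N}. T i \<noteq> 0"
    and value_a1: "\<nu> a1 / \<nu> a0 = of_nat (p 1) / of_nat (q 1)"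
    using J by (simp_all add: jumping_prefix_iff_steps)
  have a0: "a0 \<noteq> 0"
    using T01 T_nonzero by auto
  have gcd_eq: "gcd (p j) (t * q j) = t" if "1 \<le> j" "j < N" for j
    using that tdvd jumping_prefix_coprime[OF J, of j] by (intro gcd_mult_right_eq_factor) auto
  have reduced: "\<forall>i\<in>{1..N}. 0 < p i div gcd (p i) (t * q i) \<and> 0 < t * q i div gcd (p i) (t * q i)
      \<and> coprime (p i div gcd (p i) (t * q i)) (t * q i div gcd (p i) (t * q i))"
    using jumping_prefix_coprime[OF J] t by (auto simp: div_greater_zero_iff intro: div_gcd_coprime)
  have "\<nu> a1 / \<nu> (a0 ^ t) = \<nu> a1 / \<nu> a0 / of_nat t"
    using k_valuation_power[OF val a0] by (simp add: mult.commute)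
  also have "\<dots> = of_nat (p 1) / of_nat (q 1) / of_nat t"
    using value_a1 by simp
  also have "\<dots> = of_nat (p 1 div gcd (p 1) (t * q 1)) / of_nat (t * q 1 div gcd (p 1) (t * q 1))"
    using jumping_prefix_coprime(2)[OF J, of 1] N t
      of_nat_div_gcd_divide[where 'a = rat and a = "p 1" and b = "t * q 1"]
    by (simp add: mult.commute)
  finally have value_a1':
    "\<nu> a1 / \<nu> (a0 ^ t) = of_nat (p 1 div gcd (p 1) (t * q 1)) / of_nat (t * q 1 div gcd (p 1) (t * q 1))" .
  have steps: "jumping_step \<nu> kk (a0 ^ t) (T(0 := a0 ^ t))
           (\<lambda>j. p j div gcd (p j) (t * q j)) (\<lambda>j. t * q j div gcd (p j) (t * q j))
           (\<lambda>i j. if j = 0 then n i 0 div t else n i j) lam i" if "i \<in> {1..<N}" for i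
    using that val a0 T01(1) t jumping_prefix_step[OF J] jumping_prefix_dvd_base_exponent[OF J tdvd]
      gcd_eq jumping_prefix_coprime[OF J, of "Suc i"]
    by (intro jumping_step_power_base) auto
  show ?thesis
    using N T01 T_nonzero a0 reduced value_a1' steps by (simp add: jumping_prefix_iff_steps)
qed

theorem theorem7p1:
  fixes \<nu> :: "'a::field_char_0 \<Rightarrow> rat" and kk :: "'a set"
    and x y u v :: 'a and t k :: nat
    and T lam :: "nat \<Rightarrow> 'a" and p q :: "nat \<Rightarrow> nat" and n :: "nat \<Rightarrow> nat \<Rightarrow> nat"
  assumes kk: "alg_closed_subfield kk"
    and val: "k_valuation_residue_k \<nu> kk"
    and xy: "x \<noteq> 0" "y \<noteq> 0" "\<nu> x = 1" "\<nu> y > 0"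
    and S_jump: "\<forall>N\<ge>1. jumping_prefix \<nu> kk x y T p q n lam N"
    and tpos: "t > 0"
    and uv: "u = x ^ t" "v = y"
    and kpos: "k > 0"
    and tdiv: "t dvd dk p k"
  shows "\<exists>p' q' n' lam'.
           jumping_prefix \<nu> kk u v (\<lambda>i. if i = 0 then u else T i) p' q' n' lam' (Suc k) \<and>
           (\<forall>i\<in>{1..k}. p' i * t = p i \<and> q' i = q i)"
proof -
  have J: "jumping_prefix \<nu> kk x y T p q n lam (Suc k)"
    using S_jump by simp
  have tdvd: "\<forall>i\<in>{1..<Suc k}. t dvd p i"
    using tdiv unfolding dk_def by (auto intro: dvd_trans Gcd_dvd)
  have "jumping_prefix \<nu> kk u v (\<lambda>i. if i = 0 then u else T i)
      (\<lambda>j. p j div gcd (p j) (t * q j)) (\<lambda>j. t * q j div gcd (p j) (t * q j))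
      (\<lambda>i j. if j = 0 then n i 0 div t else n i j) lam (Suc k)"
    using jumping_prefix_power_base[OF val J tpos tdvd] unfolding uv fun_upd_def .
  moreover have "\<forall>i\<in>{1..k}. p i div gcd (p i) (t * q i) * t = p i
      \<and> t * q i div gcd (p i) (t * q i) = q i"
  proof
    fix i assume "i \<in> {1..k}"
    then have "t dvd p i" "gcd (p i) (t * q i) = t"
      using tdvd jumping_prefix_coprime[OF J, of i] by (auto intro: gcd_mult_right_eq_factor)
    then show "p i div gcd (p i) (t * q i) * t = p i \<and> t * q i div gcd (p i) (t * q i) = q i"
      using tpos by simp
  qed
  ultimately show ?thesis
    by blast
qed

end
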